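(* For any partition $\lambda$, we have $\operatorname{He}_\lambda\in \mathbb{Z}[x]$.
   Context: $(\operatorname{He}_k)_{k\ge0}$ are the probabilists' Hermite polynomials, with $\sum_{k\ge0}\operatorname{He}_k(x)t^k/k!=\exp(xt-\tfrac12t^2)$; they form an Appell sequence ($\operatorname{He}_0=1$, $\operatorname{He}_n'=n\operatorname{He}_{n-1}$). For a partition $\lambda$ of length $r$, let $(n_1,\dots,n_r)=(\lambda_r,\lambda_{r-1}+1,\dots,\lambda_1+r-1)$ and $\operatorname{He}_\lambda=\operatorname{Wr}[\operatorname{He}_{n_1},\dots,\operatorname{He}_{n_r}]/\Delta(n_1,\dots,n_r)$, where $\operatorname{Wr}$ is the Wronskian and $\Delta(x_1,\dots,x_r)=\prod_{i<j}(x_j-x_i)$ the Vandermonde determinant. *)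

theory Defs
  imports "HOL-Computational_Algebra.Polynomial" "Jordan_Normal_Form.Determinant"
begin

text \<open>Probabilists' Hermite polynomials (rational coefficients), via the standard
  three-term recurrence He_{n+1} = x He_n - n He_{n-1}, which is equivalent to the
  generating function exp(xt - t^2/2).\<close>
fun hermite_He :: "nat \<Rightarrow> rat poly" where
  "hermite_He 0 = 1"
| "hermite_He (Suc 0) = [:0, 1:]"
| "hermite_He (Suc (Suc n)) = [:0, 1:] * hermite_He (Suc n) - smult (of_nat (Suc n)) (hermite_He n)"

definition is_partition :: "nat list \<Rightarrow> bool" where
  "is_partition lam \<longleftrightarrow> sorted (rev lam) \<and> (\<forall>x\<in>set lam. 0 < x)"

definition degree_seq :: "nat list \<Rightarrow> nat list" where
  "degree_seq lam = map (\<lambda>i. lam ! (length lam - 1 - i) + i) [0..<length lam]"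

definition wronskian :: "rat poly list \<Rightarrow> rat poly" where
  "wronskian fs = det (mat (length fs) (length fs) (\<lambda>(i, j). (pderiv ^^ i) (fs ! j)))"

definition vandermonde :: "nat list \<Rightarrow> rat" where
  "vandermonde xs = (\<Prod>(i, j)\<in>{(i, j). i < j \<and> j < length xs}. of_nat (xs ! j) - of_nat (xs ! i))"

definition hermite_He_partition :: "nat list \<Rightarrow> rat poly" where
  "hermite_He_partition lam =
     smult (1 / vandermonde (degree_seq lam)) (wronskian (map hermite_He (degree_seq lam)))"

end

theory Submission
  imports Defs
begin

text \<open>The Wronskian is det (He_{n_j}^{(i)}). More generally, for arbitrary orders of
  differentiation R_1, ..., R_r we show by induction on r that det (He_{n_j}^{(R_i)}) is
  \<Delta>(n_1, ..., n_r) times a polynomial in \<int>[x]. Expanding along the last column, whose degree c is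
  regarded as a variable, the determinant equals \<Delta>(n_1, ..., n_{r-1}) F(c) with
  F(c) = \<Sum>_i m_i He_c^{(R_i)} and m_i \<in> \<int>[x]. Because He_k' = k He_{k-1} and
  x He_k = He_{k+1} + k He_{k-1}, every such F can be written F(c) = \<Sum>_d \<phi>_d(c) He_{c+d} with
  \<phi>_d \<in> \<int>[t]. Two equal columns give F(n_j) = 0 for j < r, so by linear independence of the He_k
  every \<phi>_d vanishes at n_1, ..., n_{r-1} and is divisible in \<int>[t] by the monic polynomial
  \<Prod>_{j<r} (t - n_j); evaluating at c = n_r supplies the missing factors of \<Delta>(n_1, ..., n_r).\<close>

definition int_poly :: "rat poly \<Rightarrow> bool" where
  "int_poly p \<longleftrightarrow> (\<forall>k. coeff p k \<in> \<int>)"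

lemma int_poly_0 [simp]: "int_poly 0"
  and int_poly_1 [simp]: "int_poly 1"
  and int_poly_X: "int_poly [:0, 1:]"
  by (auto simp: int_poly_def coeff_pCons split: nat.split)

lemma int_poly_pCons: "int_poly (pCons a p) \<longleftrightarrow> a \<in> \<int> \<and> int_poly p"
  unfolding int_poly_def by (auto simp: coeff_pCons split: nat.splits)

lemma int_poly_add: "int_poly p \<Longrightarrow> int_poly q \<Longrightarrow> int_poly (p + q)"
  and int_poly_diff: "int_poly p \<Longrightarrow> int_poly q \<Longrightarrow> int_poly (p - q)"
  and int_poly_smult: "a \<in> \<int> \<Longrightarrow> int_poly p \<Longrightarrow> int_poly (smult a p)"
  unfolding int_poly_def by auto

lemma int_poly_mult: "int_poly p \<Longrightarrow> int_poly q \<Longrightarrow> int_poly (p * q)"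
  unfolding int_poly_def coeff_mult by auto

lemma int_poly_sum: "(\<And>i. i \<in> A \<Longrightarrow> int_poly (f i)) \<Longrightarrow> int_poly (\<Sum>i\<in>A. f i)"
  by (induction A rule: infinite_finite_induct) (auto intro: int_poly_add)

lemma int_poly_minus_one_power: "int_poly ((-1) ^ k)"
  by (induction k) (auto simp: int_poly_def)

lemma smult_sum_right: "smult a (\<Sum>x\<in>A. f x) = (\<Sum>x\<in>A. smult a (f x))"
  by (induction A rule: infinite_finite_induct) (auto simp: smult_add_right)

lemma pderiv_sum: "pderiv (\<Sum>x\<in>A. f x) = (\<Sum>x\<in>A. pderiv (f x))"
  using higher_pderiv_sum[of 1] by simp


subsection \<open>Hermite polynomials\<close>

lemma int_poly_hermite_He: "int_poly (hermite_He n)"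
  by (induction n rule: hermite_He.induct)
     (auto intro!: int_poly_diff int_poly_mult int_poly_smult simp: int_poly_X int_poly_pCons)

lemma coeff_hermite_He: "coeff (hermite_He n) n = 1 \<and> (\<forall>k>n. coeff (hermite_He n) k = 0)"
proof (induction n rule: hermite_He.induct)
  case (3 n)
  show ?case
  proof (intro conjI allI impI)
    show "coeff (hermite_He (Suc (Suc n))) (Suc (Suc n)) = 1"
      using 3 by simp
    fix k assume "k > Suc (Suc n)"
    then obtain j where "k = Suc j" "j > Suc n" by (cases k) auto
    then show "coeff (hermite_He (Suc (Suc n))) k = 0"
      using 3 by simp
  qed
qed (auto simp: coeff_pCons split: nat.splits)

lemma pderiv_hermite_He: "pderiv (hermite_He (Suc n)) = smult (of_nat (Suc n)) (hermite_He n)"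
proof (induction n rule: hermite_He.induct)
  case (3 n)
  let ?H = hermite_He
  define m where "m = Suc n"
  have IH: "pderiv (?H (Suc m)) = smult (of_nat (Suc m)) (?H m)" "pderiv (?H m) = smult (of_nat m) (?H n)"
    using 3 by (simp_all add: m_def)
  have rec: "[:0, 1:] * ?H m - smult (of_nat m) (?H n) = ?H (Suc m)"
    by (simp add: m_def)
  have "pderiv (?H (Suc (Suc m))) = ?H (Suc m) + smult (of_nat (Suc m)) ([:0, 1:] * ?H m - smult (of_nat m) (?H n))"
    by (simp add: IH pderiv_mult pderiv_diff pderiv_smult pderiv_pCons smult_diff_right
        del: mult_pCons_left)
  also have "\<dots> = smult (of_nat (Suc (Suc m))) (?H (Suc m))"
    unfolding rec by (metis smult_add_left smult_1_left of_nat_Suc)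
  finally show ?case by (simp add: m_def)
qed (simp_all add: pderiv_pCons pderiv_mult pderiv_diff algebra_simps)

text \<open>Extending by zero to negative degrees lets shifts of the degree be taken freely.\<close>

definition hermite_He_ext :: "int \<Rightarrow> rat poly" where
  "hermite_He_ext k = (if k < 0 then 0 else hermite_He (nat k))"

lemma hermite_He_ext_of_nat [simp]: "hermite_He_ext (int n) = hermite_He n"
  by (simp add: hermite_He_ext_def)

lemma int_poly_hermite_He_ext: "int_poly (hermite_He_ext k)"
  unfolding hermite_He_ext_def using int_poly_hermite_He by auto

lemma pderiv_hermite_He_ext: "pderiv (hermite_He_ext k) = smult (of_int k) (hermite_He_ext (k - 1))"
proof (cases "k \<le> 0")
  case False
  define n where "n = nat (k - 1)"
  have k: "k = int (Suc n)" and k1: "k - 1 = int n" using False unfolding n_def by simp_all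
  show ?thesis
    unfolding k1 unfolding k hermite_He_ext_of_nat pderiv_hermite_He by simp
qed (auto simp: hermite_He_ext_def)

lemma X_mult_hermite_He_ext:
  assumes "k \<ge> 0"
  shows "[:0, 1:] * hermite_He_ext k = hermite_He_ext (k + 1) + pderiv (hermite_He_ext k)"
proof -
  obtain n where n: "k = int n" using assms nonneg_eq_int by blast
  then have k1: "k + 1 = int (Suc n)" by simp
  show ?thesis
  proof (cases n)
    case 0
    then show ?thesis using n by (simp add: hermite_He_ext_def)
  next
    case (Suc m)
    show ?thesis unfolding k1 unfolding n Suc hermite_He_ext_of_nat by (simp add: pderiv_hermite_He)
  qed
qed

lemma hermite_He_ext_independent:
  fixes a :: "int \<Rightarrow> rat"
  assumes fin: "finite D"
    and neg: "\<And>d. d \<in> D \<Longrightarrow> k + d < 0 \<Longrightarrow> a d = 0"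
    and sum0: "(\<Sum>d\<in>D. smult (a d) (hermite_He_ext (k + d))) = 0"
  shows "\<forall>d\<in>D. a d = 0"
proof (rule ccontr)
  assume "\<not> (\<forall>d\<in>D. a d = 0)"
  then have ne: "{d\<in>D. a d \<noteq> 0} \<noteq> {}" by auto
  have finP: "finite {d\<in>D. a d \<noteq> 0}" using fin by auto
  define d0 where "d0 = Max {d\<in>D. a d \<noteq> 0}"
  have d0: "d0 \<in> D" "a d0 \<noteq> 0" using Max_in[OF finP ne] unfolding d0_def by auto
  have d0_max: "d \<le> d0" if "d \<in> D" "a d \<noteq> 0" for d
    using Max_ge[OF finP] that unfolding d0_def by auto
  define N where "N = nat (k + d0)"
  have "0 \<le> k + d0" using neg[OF d0(1)] d0(2) by linarith
  then have N: "int N = k + d0" unfolding N_def by simp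
  \<comment> \<open>the coefficient of \<open>x\<^sup>N\<close> only sees the term of highest degree\<close>
  have others: "a d * coeff (hermite_He_ext (k + d)) N = 0" if "d \<in> D - {d0}" for d
  proof (cases "a d = 0")
    case False
    from that have d: "d \<in> D" "d \<noteq> d0" by auto
    have "0 \<le> k + d" using neg[OF d(1)] False by linarith
    moreover have "k + d < k + d0" using d0_max[OF d(1) False] d(2) by simp
    ultimately show ?thesis
      using coeff_hermite_He[of "nat (k + d)"] N by (simp add: hermite_He_ext_def)
  qed simp
  have rest: "(\<Sum>d\<in>D - {d0}. a d * coeff (hermite_He_ext (k + d)) N) = 0"
    using others by (intro sum.neutral ballI)
  have "0 = coeff (\<Sum>d\<in>D. smult (a d) (hermite_He_ext (k + d))) N" using sum0 by simp
  also have "\<dots> = a d0 * coeff (hermite_He_ext (k + d0)) N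
      + (\<Sum>d\<in>D - {d0}. a d * coeff (hermite_He_ext (k + d)) N)"
    by (simp add: coeff_sum sum.remove[OF fin d0(1)])
  also have "\<dots> = a d0"
    using rest coeff_hermite_He[of N] by (simp flip: N)
  finally show False using d0(2) by simp
qed


subsection \<open>Families with integral expansions in shifted Hermite polynomials\<close>

text \<open>The coefficient \<phi>_d(c) must vanish when c + d < 0, since x He_k = He_{k+1} + He_k' fails for k = -1.\<close>

definition hermite_term :: "(int \<Rightarrow> int poly) \<Rightarrow> nat \<Rightarrow> int \<Rightarrow> rat poly" where
  "hermite_term \<phi> c d = smult (of_int (poly (\<phi> d) (int c))) (hermite_He_ext (int c + d))"

definition hermite_expansion :: "(nat \<Rightarrow> rat poly) \<Rightarrow> int set \<Rightarrow> (int \<Rightarrow> int poly) \<Rightarrow> bool" where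
  "hermite_expansion F D \<phi> \<longleftrightarrow> finite D \<and> (\<forall>d c. int c + d < 0 \<longrightarrow> poly (\<phi> d) (int c) = 0)
     \<and> (\<forall>c. F c = (\<Sum>d\<in>D. hermite_term \<phi> c d))"

definition hermite_expandable :: "(nat \<Rightarrow> rat poly) \<Rightarrow> bool" where
  "hermite_expandable F \<longleftrightarrow> (\<exists>D \<phi>. hermite_expansion F D \<phi>)"

lemma hermite_expandable_hermite_He: "hermite_expandable hermite_He"
proof -
  have "hermite_expansion hermite_He {0} (\<lambda>d. if d = 0 then 1 else 0)"
    unfolding hermite_expansion_def hermite_term_def hermite_He_ext_def by auto
  then show ?thesis unfolding hermite_expandable_def by blast
qed

lemma hermite_expandable_0: "hermite_expandable (\<lambda>c. 0)"
proof -
  have "hermite_expansion (\<lambda>c. 0) {} (\<lambda>d. 0)"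
    unfolding hermite_expansion_def by auto
  then show ?thesis unfolding hermite_expandable_def by blast
qed

lemma hermite_expandable_add:
  assumes "hermite_expandable F" "hermite_expandable G"
  shows "hermite_expandable (\<lambda>c. F c + G c)"
proof -
  obtain D1 \<phi>1 where 1: "hermite_expansion F D1 \<phi>1"
    using assms(1) unfolding hermite_expandable_def by blast
  obtain D2 \<phi>2 where 2: "hermite_expansion G D2 \<phi>2"
    using assms(2) unfolding hermite_expandable_def by blast
  define \<phi> where "\<phi> d = (if d \<in> D1 then \<phi>1 d else 0) + (if d \<in> D2 then \<phi>2 d else 0)" for d
  have fin: "finite (D1 \<union> D2)" using 1 2 unfolding hermite_expansion_def by auto
  have restrict: "(\<Sum>d\<in>D1 \<union> D2. if d \<in> D then hermite_term \<psi> c d else 0) = (\<Sum>d\<in>D. hermite_term \<psi> c d)"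
    if "D \<subseteq> D1 \<union> D2" for D \<psi> c
    by (rule sum.mono_neutral_cong_right) (use fin that in auto)
  have "hermite_expansion (\<lambda>c. F c + G c) (D1 \<union> D2) \<phi>"
    unfolding hermite_expansion_def
  proof (intro conjI allI impI)
    fix d c assume "int c + d < 0"
    then show "poly (\<phi> d) (int c) = 0" using 1 2 unfolding hermite_expansion_def \<phi>_def by auto
  next
    fix c
    have "hermite_term \<phi> c d = (if d \<in> D1 then hermite_term \<phi>1 c d else 0)
        + (if d \<in> D2 then hermite_term \<phi>2 c d else 0)" for d
      unfolding \<phi>_def hermite_term_def by (simp add: smult_add_left)
    then have "(\<Sum>d\<in>D1 \<union> D2. hermite_term \<phi> c d)
        = (\<Sum>d\<in>D1. hermite_term \<phi>1 c d) + (\<Sum>d\<in>D2. hermite_term \<phi>2 c d)"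
      by (simp only: sum.distrib restrict Un_upper1 Un_upper2)
    then show "F c + G c = (\<Sum>d\<in>D1 \<union> D2. hermite_term \<phi> c d)"
      using 1 2 unfolding hermite_expansion_def by simp
  qed (rule fin)
  then show ?thesis unfolding hermite_expandable_def by blast
qed

lemma hermite_expandable_smult:
  assumes "hermite_expandable F"
  shows "hermite_expandable (\<lambda>c. smult (of_int z) (F c))"
proof -
  obtain D \<phi> where "hermite_expansion F D \<phi>"
    using assms unfolding hermite_expandable_def by blast
  then have "hermite_expansion (\<lambda>c. smult (of_int z) (F c)) D (\<lambda>d. smult z (\<phi> d))"
    unfolding hermite_expansion_def hermite_term_def by (auto simp: smult_sum_right)
  then show ?thesis unfolding hermite_expandable_def by blast
qed

lemma hermite_expansion_pderiv:
  assumes "hermite_expansion F D \<phi>"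
  shows "hermite_expansion (\<lambda>c. pderiv (F c)) ((\<lambda>d. d - 1) ` D) (\<lambda>d. \<phi> (d + 1) * [:d + 1, 1:])"
  unfolding hermite_expansion_def
proof (intro conjI allI impI)
  show "finite ((\<lambda>d. d - 1) ` D)" using assms unfolding hermite_expansion_def by auto
  fix d c assume "int c + d < 0"
  moreover have "poly (\<phi> (d + 1) * [:d + 1, 1:]) (int c) = poly (\<phi> (d + 1)) (int c) * (d + 1 + int c)"
    by (simp add: algebra_simps)
  ultimately show "poly (\<phi> (d + 1) * [:d + 1, 1:]) (int c) = 0"
    using assms unfolding hermite_expansion_def by (cases "int c + (d + 1) < 0") auto
next
  fix c
  have inj: "inj_on (\<lambda>d. d - 1) D" by (auto simp: inj_on_def)
  have "pderiv (F c) = (\<Sum>d\<in>D. pderiv (hermite_term \<phi> c d))"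
    using assms unfolding hermite_expansion_def by (simp add: pderiv_sum)
  also have "\<dots> = (\<Sum>d\<in>D. hermite_term (\<lambda>d. \<phi> (d + 1) * [:d + 1, 1:]) c (d - 1))"
    by (rule sum.cong) (auto simp: hermite_term_def pderiv_smult pderiv_hermite_He_ext algebra_simps)
  also have "\<dots> = (\<Sum>d\<in>(\<lambda>d. d - 1) ` D. hermite_term (\<lambda>d. \<phi> (d + 1) * [:d + 1, 1:]) c d)"
    by (simp add: sum.reindex[OF inj])
  finally show "pderiv (F c) = \<dots>" .
qed

lemma hermite_expandable_pderiv: "hermite_expandable F \<Longrightarrow> hermite_expandable (\<lambda>c. pderiv (F c))"
  unfolding hermite_expandable_def using hermite_expansion_pderiv by blast

lemma hermite_expandable_higher_pderiv: "hermite_expandable (\<lambda>c. (pderiv ^^ m) (hermite_He c))"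
  by (induction m) (auto intro: hermite_expandable_pderiv hermite_expandable_hermite_He)

lemma hermite_expandable_X_mult:
  assumes "hermite_expandable F"
  shows "hermite_expandable (\<lambda>c. [:0, 1:] * F c)"
proof -
  obtain D \<phi> where F: "hermite_expansion F D \<phi>"
    using assms unfolding hermite_expandable_def by blast
  define G where "G c = (\<Sum>d\<in>D. smult (of_int (poly (\<phi> d) (int c))) (hermite_He_ext (int c + d + 1)))" for c
  have inj: "inj_on (\<lambda>d. d + 1) D" by (auto simp: inj_on_def)
  have "hermite_expansion G ((\<lambda>d. d + 1) ` D) (\<lambda>d. \<phi> (d - 1))"
    unfolding hermite_expansion_def
  proof (intro conjI allI impI)
    show "finite ((\<lambda>d. d + 1) ` D)" using F unfolding hermite_expansion_def by auto
    fix d c assume "int c + d < 0"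
    then show "poly (\<phi> (d - 1)) (int c) = 0" using F unfolding hermite_expansion_def by auto
  next
    fix c
    have "G c = (\<Sum>d\<in>D. hermite_term (\<lambda>d. \<phi> (d - 1)) c (d + 1))"
      unfolding G_def hermite_term_def by (simp add: algebra_simps)
    also have "\<dots> = (\<Sum>d\<in>(\<lambda>d. d + 1) ` D. hermite_term (\<lambda>d. \<phi> (d - 1)) c d)"
      by (simp add: sum.reindex[OF inj])
    finally show "G c = \<dots>" .
  qed
  then have "hermite_expandable (\<lambda>c. G c + pderiv (F c))"
    using hermite_expandable_add hermite_expandable_pderiv assms
    unfolding hermite_expandable_def by blast
  moreover have "[:0, 1:] * F c = G c + pderiv (F c)" for c
  proof -
    have "[:0, 1:] * hermite_term \<phi> c d = smult (of_int (poly (\<phi> d) (int c))) (hermite_He_ext (int c + d + 1))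
        + pderiv (hermite_term \<phi> c d)" if "d \<in> D" for d
    proof (cases "int c + d < 0")
      case False
      then have "[:0, 1:] * hermite_He_ext (int c + d)
          = hermite_He_ext (int c + d + 1) + pderiv (hermite_He_ext (int c + d))"
        by (intro X_mult_hermite_He_ext) simp
      then show ?thesis
        by (simp only: hermite_term_def mult_smult_right pderiv_smult smult_add_right)
    qed (use F in \<open>auto simp: hermite_expansion_def hermite_term_def\<close>)
    then show ?thesis
      using F unfolding hermite_expansion_def G_def
      by (simp add: sum_distrib_left pderiv_sum sum.distrib)
  qed
  ultimately show ?thesis by simp
qed

lemma hermite_expandable_mult:
  assumes "int_poly a" "hermite_expandable F"
  shows "hermite_expandable (\<lambda>c. a * F c)"
  using assms(1)
proof (induction a)
  case (pCons a0 p)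
  then obtain z where z: "a0 = of_int z" and p: "int_poly p"
    by (auto simp: int_poly_pCons elim: Ints_cases)
  have "pCons a0 p * F c = smult (of_int z) (F c) + [:0, 1:] * (p * F c)" for c
    by (simp add: z)
  then show ?case
    using hermite_expandable_add[OF hermite_expandable_smult[OF assms(2)]
        hermite_expandable_X_mult[OF pCons.IH[OF p]]]
    by simp
qed (simp add: hermite_expandable_0)

lemma hermite_expandable_sum:
  "(\<And>i. i < (k :: nat) \<Longrightarrow> hermite_expandable (f i)) \<Longrightarrow> hermite_expandable (\<lambda>c. \<Sum>i<k. f i c)"
  by (induction k) (auto intro: hermite_expandable_add hermite_expandable_0)

lemma int_poly_vanishing_factor:
  fixes \<phi> :: "int poly"
  assumes "distinct S" "\<And>s. s \<in> set S \<Longrightarrow> poly \<phi> (int s) = 0"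
  shows "\<exists>\<psi>. \<forall>z. poly \<phi> z = (\<Prod>i<length S. z - int (S ! i)) * poly \<psi> z"
  using assms
proof (induction S arbitrary: \<phi>)
  case (Cons s S)
  then obtain \<psi>1 where \<psi>1: "\<phi> = [:- int s, 1:] * \<psi>1"
    using poly_eq_0_iff_dvd by (metis dvdE list.set_intros(1))
  have "poly \<psi>1 (int s') = 0" if "s' \<in> set S" for s'
    using Cons.prems that unfolding \<psi>1 by auto
  then have "\<exists>\<psi>. \<forall>z. poly \<psi>1 z = (\<Prod>i<length S. z - int (S ! i)) * poly \<psi> z"
    using Cons.IH Cons.prems(1) by simp
  then obtain \<psi> where "\<forall>z. poly \<psi>1 z = (\<Prod>i<length S. z - int (S ! i)) * poly \<psi> z" ..
  then have "poly \<phi> z = (\<Prod>i<length (s # S). z - int ((s # S) ! i)) * poly \<psi> z" for z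
    unfolding \<psi>1 by (simp add: prod.lessThan_Suc_shift algebra_simps del: prod.lessThan_Suc)
  then show ?case by blast
qed auto

lemma hermite_expansion_vanishing_factor:
  assumes exp: "hermite_expansion F D \<phi>" and dist: "distinct S"
    and vanish: "\<And>s. s \<in> set S \<Longrightarrow> F s = 0"
  shows "\<exists>q. int_poly q \<and> F c = smult (\<Prod>i<length S. of_nat c - of_nat (S ! i)) q"
proof -
  have fin: "finite D" and neg: "\<And>d c. int c + d < 0 \<Longrightarrow> poly (\<phi> d) (int c) = 0"
    and F: "\<And>c. F c = (\<Sum>d\<in>D. hermite_term \<phi> c d)"
    using exp unfolding hermite_expansion_def by auto
  have roots: "poly (\<phi> d) (int s) = 0" if "d \<in> D" "s \<in> set S" for d s
  proof -
    have "(\<Sum>d\<in>D. smult (of_int (poly (\<phi> d) (int s))) (hermite_He_ext (int s + d))) = 0"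
      using vanish[OF that(2)] F[of s] unfolding hermite_term_def by simp
    then have "\<forall>d\<in>D. (of_int (poly (\<phi> d) (int s)) :: rat) = 0"
      by (intro hermite_He_ext_independent[OF fin]) (use neg in auto)
    then show ?thesis using that by auto
  qed
  have "\<forall>d\<in>D. \<exists>\<psi>. \<forall>z. poly (\<phi> d) z = (\<Prod>i<length S. z - int (S ! i)) * poly \<psi> z"
    using int_poly_vanishing_factor[OF dist] roots by blast
  then obtain \<psi> where \<psi>: "\<And>d z. d \<in> D \<Longrightarrow> poly (\<phi> d) z = (\<Prod>i<length S. z - int (S ! i)) * poly (\<psi> d) z"
    by metis
  define q where "q = (\<Sum>d\<in>D. smult (of_int (poly (\<psi> d) (int c))) (hermite_He_ext (int c + d)))"
  have "int_poly q"
    unfolding q_def by (intro int_poly_sum int_poly_smult int_poly_hermite_He_ext) auto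
  moreover have "F c = smult (\<Prod>i<length S. of_nat c - of_nat (S ! i)) q"
  proof -
    have "F c = (\<Sum>d\<in>D. smult (of_int (\<Prod>i<length S. int c - int (S ! i)))
        (smult (of_int (poly (\<psi> d) (int c))) (hermite_He_ext (int c + d))))"
      unfolding F hermite_term_def by (rule sum.cong) (auto simp: \<psi>)
    then show ?thesis
      unfolding q_def by (simp add: smult_sum_right)
  qed
  ultimately show ?thesis by blast
qed


subsection \<open>The Vandermonde determinant\<close>

lemma vandermonde_Nil: "vandermonde [] = 1"
  unfolding vandermonde_def by simp

lemma vandermonde_snoc:
  "vandermonde (xs @ [c]) = vandermonde xs * (\<Prod>i<length xs. of_nat c - of_nat (xs ! i))"
proof -
  define m where "m = length xs"
  define f where "f = (\<lambda>(i, j). (of_nat ((xs @ [c]) ! j) - of_nat ((xs @ [c]) ! i) :: rat))"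
  have split: "{(i, j). i < j \<and> j < Suc m} = {(i, j). i < j \<and> j < m} \<union> (\<lambda>i. (i, m)) ` {..<m}"
    by auto
  have fin: "finite {(i, j). i < j \<and> j < m}"
    by (rule finite_subset[of _ "{..<m} \<times> {..<m}"]) auto
  have "vandermonde (xs @ [c]) = prod f {(i, j). i < j \<and> j < Suc m}"
    unfolding vandermonde_def m_def f_def by simp
  also have "\<dots> = prod f {(i, j). i < j \<and> j < m} * prod f ((\<lambda>i. (i, m)) ` {..<m})"
    unfolding split by (rule prod.union_disjoint) (use fin in auto)
  also have "prod f {(i, j). i < j \<and> j < m} = vandermonde xs"
    unfolding vandermonde_def m_def f_def by (rule prod.cong) (auto simp: nth_append)
  also have "prod f ((\<lambda>i. (i, m)) ` {..<m}) = (\<Prod>i<length xs. of_nat c - of_nat (xs ! i))"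
    by (subst prod.reindex) (auto simp: inj_on_def m_def f_def nth_append intro!: prod.cong)
  finally show ?thesis .
qed

lemma distinct_if_vandermonde_nonzero:
  assumes "vandermonde xs \<noteq> 0" shows "distinct xs"
proof (rule ccontr)
  assume "\<not> distinct xs"
  then obtain i j where ij: "i < j" "j < length xs" "xs ! i = xs ! j"
    by (metis distinct_conv_nth linorder_neqE_nat)
  have "finite {(i, j). i < j \<and> j < length xs}"
    by (rule finite_subset[of _ "{..<length xs} \<times> {..<length xs}"]) auto
  then have "vandermonde xs = 0"
    unfolding vandermonde_def by (rule prod_zero) (use ij in force)
  then show False using assms by simp
qed


subsection \<open>Generalised Wronskians of Hermite polynomials\<close>

definition hermite_deriv_mat :: "nat list \<Rightarrow> nat list \<Rightarrow> rat poly mat" where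
  "hermite_deriv_mat R ns = mat (length ns) (length ns) (\<lambda>(i, j). (pderiv ^^ (R ! i)) (hermite_He (ns ! j)))"

lemma hermite_deriv_mat_carrier: "hermite_deriv_mat R ns \<in> carrier_mat (length ns) (length ns)"
  unfolding hermite_deriv_mat_def by simp

lemma mat_delete_hermite_deriv_mat:
  assumes "length R = Suc (length ns)" "i < Suc (length ns)"
  shows "mat_delete (hermite_deriv_mat R (ns @ [c])) i (length ns)
    = hermite_deriv_mat (take i R @ drop (Suc i) R) ns"
proof (rule eq_matI)
  fix i' j' assume "i' < dim_row (hermite_deriv_mat (take i R @ drop (Suc i) R) ns)"
    "j' < dim_col (hermite_deriv_mat (take i R @ drop (Suc i) R) ns)"
  then have "i' < length ns" "j' < length ns" unfolding hermite_deriv_mat_def by auto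
  with assms show "mat_delete (hermite_deriv_mat R (ns @ [c])) i (length ns) $$ (i', j')
      = hermite_deriv_mat (take i R @ drop (Suc i) R) ns $$ (i', j')"
    unfolding mat_delete_def hermite_deriv_mat_def by (auto simp: nth_append min_def)
qed (auto simp: mat_delete_def hermite_deriv_mat_def)

lemma det_hermite_deriv_mat_snoc:
  assumes "length R = Suc (length ns)"
  shows "det (hermite_deriv_mat R (ns @ [c])) = (\<Sum>i<length R.
    (-1) ^ (i + length ns) * det (hermite_deriv_mat (take i R @ drop (Suc i) R) ns)
      * (pderiv ^^ (R ! i)) (hermite_He c))"
proof -
  let ?A = "hermite_deriv_mat R (ns @ [c])"
  have "?A \<in> carrier_mat (length R) (length R)"
    using hermite_deriv_mat_carrier[of R "ns @ [c]"] assms by simp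
  then have "det ?A = (\<Sum>i<length R. ?A $$ (i, length ns) * cofactor ?A i (length ns))"
    by (rule laplace_expansion_column) (simp add: assms)
  also have "\<dots> = (\<Sum>i<length R. (-1) ^ (i + length ns)
      * det (hermite_deriv_mat (take i R @ drop (Suc i) R) ns) * (pderiv ^^ (R ! i)) (hermite_He c))"
  proof (rule sum.cong)
    fix i assume "i \<in> {..<length R}"
    with assms show "?A $$ (i, length ns) * cofactor ?A i (length ns) = (-1) ^ (i + length ns)
        * det (hermite_deriv_mat (take i R @ drop (Suc i) R) ns) * (pderiv ^^ (R ! i)) (hermite_He c)"
      by (simp add: cofactor_def mat_delete_hermite_deriv_mat) (simp add: hermite_deriv_mat_def mult_ac)
  qed simp
  finally show ?thesis .
qed

lemma det_hermite_deriv_mat_not_distinct: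
  assumes "\<not> distinct ns"
  shows "det (hermite_deriv_mat R ns) = 0"
proof -
  obtain i j where ij: "i < j" "j < length ns" "ns ! i = ns ! j"
    using assms by (metis distinct_conv_nth linorder_neqE_nat)
  have "col (hermite_deriv_mat R ns) i = col (hermite_deriv_mat R ns) j"
    using ij by (intro eq_vecI) (auto simp: hermite_deriv_mat_def)
  with ij show ?thesis
    by (intro det_identical_columns[OF hermite_deriv_mat_carrier, of i j]) auto
qed

lemma det_hermite_deriv_mat_vandermonde_dvd:
  "length R = length ns \<Longrightarrow> \<exists>q. int_poly q \<and> det (hermite_deriv_mat R ns) = smult (vandermonde ns) q"
proof (induction ns arbitrary: R rule: rev_induct)
  case Nil
  then show ?case
    using hermite_deriv_mat_carrier[of R "[]"] by (intro exI[of _ 1]) (simp add: vandermonde_Nil)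
next
  case (snoc c ns)
  define r where "r = length ns"
  have lR: "length R = Suc r" using snoc.prems unfolding r_def by simp
  have "\<exists>q. int_poly q \<and> det (hermite_deriv_mat (take i R @ drop (Suc i) R) ns) = smult (vandermonde ns) q"
    if "i < Suc r" for i
    using that lR by (intro snoc.IH) (auto simp: r_def)
  then obtain m where m: "\<And>i. i < Suc r \<Longrightarrow> int_poly (m i)"
    "\<And>i. i < Suc r \<Longrightarrow> det (hermite_deriv_mat (take i R @ drop (Suc i) R) ns) = smult (vandermonde ns) (m i)"
    by metis
  define F where "F c' = (\<Sum>i<Suc r. ((-1) ^ (i + r) * m i) * (pderiv ^^ (R ! i)) (hermite_He c'))" for c'
  have det_F: "det (hermite_deriv_mat R (ns @ [c'])) = smult (vandermonde ns) (F c')" for c'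
    unfolding det_hermite_deriv_mat_snoc[OF snoc.prems[simplified]] F_def smult_sum_right
    by (rule sum.cong) (simp_all add: lR r_def m(2) ac_simps)
  show ?case
  proof (cases "vandermonde ns = 0")
    case True
    then show ?thesis using det_F[of c] by (intro exI[of _ 0]) (simp add: vandermonde_snoc)
  next
    case False
    then have "distinct ns" by (rule distinct_if_vandermonde_nonzero)
    moreover have "F s = 0" if "s \<in> set ns" for s
      using det_F[of s] det_hermite_deriv_mat_not_distinct[of "ns @ [s]" R] that False by simp
    moreover have "hermite_expandable F"
      unfolding F_def using m(1)
      by (intro hermite_expandable_sum hermite_expandable_mult hermite_expandable_higher_pderiv
          int_poly_mult int_poly_minus_one_power) auto
    then obtain D \<phi> where "hermite_expansion F D \<phi>" unfolding hermite_expandable_def by blast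
    ultimately obtain q where "int_poly q" "F c = smult (\<Prod>i<length ns. of_nat c - of_nat (ns ! i)) q"
      using hermite_expansion_vanishing_factor by blast
    then show ?thesis
      using det_F[of c] by (intro exI[of _ q]) (simp add: vandermonde_snoc)
  qed
qed


theorem corollary7p1:
  fixes lam :: "nat list"
  assumes "is_partition lam"
  shows "\<forall>k. coeff (hermite_He_partition lam) k \<in> \<int>"
proof -
  define ns where "ns = degree_seq lam"
  have wronskian: "wronskian (map hermite_He ns) = det (hermite_deriv_mat [0..<length ns] ns)"
    unfolding wronskian_def hermite_deriv_mat_def by (intro arg_cong[where f = det] eq_matI) auto
  obtain q where q: "int_poly q" "det (hermite_deriv_mat [0..<length ns] ns) = smult (vandermonde ns) q"
    using det_hermite_deriv_mat_vandermonde_dvd[of "[0..<length ns]" ns] by auto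
  have "hermite_He_partition lam = smult (1 / vandermonde ns * vandermonde ns) q"
    unfolding hermite_He_partition_def ns_def[symmetric] wronskian q(2) by simp
  also have "\<dots> = (if vandermonde ns = 0 then 0 else q)" by simp
  finally show ?thesis using q(1) unfolding int_poly_def by auto
qed

end
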